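(* For any simple undirected graph $G$, $$n_G(\mathcal{L}_5)=\sum_{\{st,uv\}\in Q}\Big(\sum_{w\in\Gamma(s)\setminus\{s,t,u,v\}}(a_{uw}+a_{vw})+\sum_{w\in\Gamma(t)\setminus\{s,t,u,v\}}(a_{uw}+a_{vw})\Big).$$
   Context: $a_{ij}$ are the adjacency matrix entries, $\Gamma(x)$ is the neighbourhood of $x$. $Q$ is the set of unordered pairs $\{st,uv\}$ of edges with $s,t,u,v$ pairwise distinct. $n_G(F)$ is the number of (not necessarily induced) subgraphs isomorphic to $F$; $\mathcal{L}_5$ is the path on 5 vertices. *)

theory Defs
  imports Main
begin

definition simple_graph :: "'a set \<Rightarrow> 'a set set \<Rightarrow> bool" where
  "simple_graph V E \<longleftrightarrow> finite V \<and>
     (\<forall>e\<in>E. \<exists>x y. x \<noteq> y \<and> x \<in> V \<and> y \<in> V \<and> e = {x, y})"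

definition adj :: "'a set set \<Rightarrow> 'a \<Rightarrow> 'a \<Rightarrow> nat" where
  "adj E x y = (if {x, y} \<in> E then 1 else 0)"

definition nbhd :: "'a set \<Rightarrow> 'a set set \<Rightarrow> 'a \<Rightarrow> 'a set" where
  "nbhd V E x = {y \<in> V. {x, y} \<in> E}"

definition subgraph :: "'a set \<Rightarrow> 'a set set \<Rightarrow> 'a set \<Rightarrow> 'a set set \<Rightarrow> bool" where
  "subgraph W F V E \<longleftrightarrow> W \<subseteq> V \<and> F \<subseteq> E \<and> (\<forall>e\<in>F. e \<subseteq> W)"

definition graph_iso :: "'a set \<Rightarrow> 'a set set \<Rightarrow> 'b set \<Rightarrow> 'b set set \<Rightarrow> bool" where
  "graph_iso V1 E1 V2 E2 \<longleftrightarrow> (\<exists>f. bij_betw f V1 V2 \<and>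
     (\<forall>x\<in>V1. \<forall>y\<in>V1. {x, y} \<in> E1 \<longleftrightarrow> {f x, f y} \<in> E2))"

definition subgraph_count :: "'b set \<Rightarrow> 'b set set \<Rightarrow> 'a set \<Rightarrow> 'a set set \<Rightarrow> nat" where
  "subgraph_count VH EH V E =
     card {(W, F). subgraph W F V E \<and> graph_iso VH EH W F}"

definition L5_V :: "nat set" where "L5_V = {0..<5}"
definition L5_E :: "nat set set" where "L5_E = {{i, Suc i} | i. i < 4}"

definition Qset :: "'a set set \<Rightarrow> 'a set set set" where
  "Qset E = {{{s, t}, {u, v}} | s t u v.
      {s, t} \<in> E \<and> {u, v} \<in> E \<and> distinct [s, t, u, v]}"

text \<open>The summand for a pair {st,uv}; the expression is symmetric under relabelling
  s<->t, u<->v and swapping the two edges, so any labelling may be chosen.\<close>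
definition Qterm :: "'a set \<Rightarrow> 'a set set \<Rightarrow> 'a \<Rightarrow> 'a \<Rightarrow> 'a \<Rightarrow> 'a \<Rightarrow> nat" where
  "Qterm V E s t u v =
     (\<Sum>w\<in>nbhd V E s - {s, t, u, v}. adj E u w + adj E v w) +
     (\<Sum>w\<in>nbhd V E t - {s, t, u, v}. adj E u w + adj E v w)"

definition Qsum :: "'a set \<Rightarrow> 'a set set \<Rightarrow> nat" where
  "Qsum V E = (\<Sum>p\<in>Qset E.
     (case (SOME (s, t, u, v). p = {{s, t}, {u, v}} \<and> distinct [s, t, u, v]) of
        (s, t, u, v) \<Rightarrow> Qterm V E s t u v))"

end

(* Count the ordered paths a-b-c-d-e of G on five distinct vertices in two ways.
   Every copy of L5 is traversed in exactly two directions, so there are 2 n_G(L5) of them.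
   Grouping them instead by the ordered pair of end edges (a,b), (d,e): an element {st,uv}
   of Q arises from 8 such ordered pairs, and the numbers of admissible centres c over these
   8 orderings add up to twice the sum over c of (a_sc + a_tc)(a_uc + a_vc), i.e. twice the
   summand of {st,uv}. *)

theory Submission
  imports Defs
begin

lemma card_eq_mult_card_image:
  assumes "finite A" and "\<And>y. y \<in> f ` A \<Longrightarrow> card {x \<in> A. f x = y} = k"
  shows "card A = k * card (f ` A)"
proof -
  have "card A = (\<Sum>y\<in>f ` A. card {x \<in> A. f x = y})"
    unfolding card_eq_sum by (rule sum.image_gen[OF assms(1)])
  also have "\<dots> = k * card (f ` A)"
    using assms(2) by simp
  finally show ?thesis .
qed

lemma graph_iso_edges_eq_image:
  assumes "bij_betw f V1 V2" and f_edges: "\<forall>x\<in>V1. \<forall>y\<in>V1. {x, y} \<in> E1 \<longleftrightarrow> {f x, f y} \<in> E2"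
    and E1: "\<forall>e\<in>E1. \<exists>x y. e = {x, y} \<and> e \<subseteq> V1"
    and E2: "\<forall>e\<in>E2. \<exists>x y. e = {x, y} \<and> e \<subseteq> V2"
  shows "E2 = (`) f ` E1"
proof (intro set_eqI iffI)
  fix e assume "e \<in> E2"
  with E2 obtain x' y' where e: "e = {x', y'}" and "e \<subseteq> V2"
    by meson
  then have "x' \<in> f ` V1" "y' \<in> f ` V1"
    using bij_betw_imp_surj_on[OF assms(1)] by auto
  then obtain x y where xy: "x \<in> V1" "y \<in> V1" "x' = f x" "y' = f y"
    by (auto elim!: imageE)
  with f_edges e \<open>e \<in> E2\<close> have "{x, y} \<in> E1" by simp
  moreover have "e = f ` {x, y}" using e xy by simp
  ultimately show "e \<in> (`) f ` E1" by blast
next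
  fix e assume "e \<in> (`) f ` E1"
  then obtain e1 where "e1 \<in> E1" "e = f ` e1" by blast
  moreover from this E1 obtain x y where "e1 = {x, y}" "e1 \<subseteq> V1"
    by meson
  ultimately show "e \<in> E2" using f_edges by auto
qed

lemma simple_graph_finite: "simple_graph V E \<Longrightarrow> finite V"
  unfolding simple_graph_def by blast

lemma simple_graph_edge_vertices:
  assumes "simple_graph V E" "{x, y} \<in> E"
  shows "x \<in> V" "y \<in> V"
  using assms unfolding simple_graph_def by (auto simp: doubleton_eq_iff)

lemma adj_commute: "adj E x y = adj E y x"
  by (simp add: adj_def insert_commute)

lemma card_filter_eq_sum_adj:
  assumes "finite A"
  shows "card {c \<in> A. {b, c} \<in> E \<and> {c, d} \<in> E} = (\<Sum>c\<in>A. adj E b c * adj E c d)"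
proof -
  have "card {c \<in> A. {b, c} \<in> E \<and> {c, d} \<in> E} = (\<Sum>c\<in>A. if {b, c} \<in> E \<and> {c, d} \<in> E then 1 else 0)"
    using assms by (simp add: sum.inter_filter[symmetric])
  also have "\<dots> = (\<Sum>c\<in>A. adj E b c * adj E c d)"
    by (rule sum.cong) (auto simp: adj_def)
  finally show ?thesis .
qed

definition path_edges :: "'a \<Rightarrow> 'a \<Rightarrow> 'a \<Rightarrow> 'a \<Rightarrow> 'a \<Rightarrow> 'a set set" where
  "path_edges a b c d e = {{a, b}, {b, c}, {c, d}, {d, e}}"

lemma path_edges_rev: "path_edges e d c b a = path_edges a b c d e"
  unfolding path_edges_def by (auto simp: insert_commute)

lemma path_edges_neighbours:
  assumes "distinct [a, b, c, d, e]"
  shows "{y. {a, y} \<in> path_edges a b c d e} = {b}"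
    and "{y. {b, y} \<in> path_edges a b c d e} = {a, c}"
    and "{y. {c, y} \<in> path_edges a b c d e} = {b, d}"
    and "{y. {d, y} \<in> path_edges a b c d e} = {c, e}"
    and "{y. {e, y} \<in> path_edges a b c d e} = {d}"
  using assms unfolding path_edges_def by (auto simp: doubleton_eq_iff)

lemma path_edges_eq_same_start:
  assumes "distinct [a, b, c, d, e]" "distinct [a, b', c', d', e']"
    and "path_edges a b' c' d' e' = path_edges a b c d e"
  shows "(b', c', d', e') = (b, c, d, e)"
proof -
  note N = path_edges_neighbours[OF assms(1), folded assms(3)]
  note N' = path_edges_neighbours[OF assms(2)]
  have "b' = b" using N(1) N'(1) by auto
  moreover from this have "c' = c" using N(2) N'(2) assms(1,2) by (auto simp: doubleton_eq_iff)
  moreover from calculation have "d' = d" using N(3) N'(3) assms(1,2) by (auto simp: doubleton_eq_iff)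
  moreover from calculation have "e' = e" using N(4) N'(4) assms(1,2) by (auto simp: doubleton_eq_iff)
  ultimately show ?thesis by simp
qed

lemma path_edges_eq_iff:
  assumes "distinct [a, b, c, d, e]" "distinct [a', b', c', d', e']"
  shows "path_edges a' b' c' d' e' = path_edges a b c d e \<longleftrightarrow>
    (a', b', c', d', e') = (a, b, c, d, e) \<or> (a', b', c', d', e') = (e, d, c, b, a)"
proof
  assume eq: "path_edges a' b' c' d' e' = path_edges a b c d e"
  note N = path_edges_neighbours[OF assms(1), folded eq]
  note N' = path_edges_neighbours[OF assms(2)]
  have "{a', b'} \<in> path_edges a b c d e"
    unfolding eq[symmetric] by (simp add: path_edges_def)
  then have "a' \<in> {a, b, c, d, e}"
    unfolding path_edges_def by (auto simp: doubleton_eq_iff)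
  \<comment> \<open>a' has a single neighbour, and only the ends of a path do\<close>
  then have "a' = a \<or> a' = e"
    using N N'(1) assms(1) by (auto simp: doubleton_eq_iff)
  then show "(a', b', c', d', e') = (a, b, c, d, e) \<or> (a', b', c', d', e') = (e, d, c, b, a)"
  proof
    assume "a' = a"
    with assms eq show ?thesis
      using path_edges_eq_same_start[of a b c d e b' c' d' e'] by simp
  next
    assume "a' = e"
    moreover have "distinct [e, d, c, b, a]" using assms(1) by auto
    moreover have "path_edges e b' c' d' e' = path_edges e d c b a"
      using eq \<open>a' = e\<close> path_edges_rev[of e d c b a] by simp
    ultimately show ?thesis
      using path_edges_eq_same_start[of e d c b a b' c' d' e'] assms(2) by simp
  qed
next
  show "(a', b', c', d', e') = (a, b, c, d, e) \<or> (a', b', c', d', e') = (e, d, c, b, a) \<Longrightarrow>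
      path_edges a' b' c' d' e' = path_edges a b c d e"
    using path_edges_rev[of a b c d e] by auto
qed

lemma L5_V_eq: "L5_V = {0, 1, 2, 3, 4}"
  unfolding L5_V_def by auto

lemma L5_E_eq: "L5_E = {{0, 1}, {1, 2}, {2, 3}, {3, 4}}"
proof -
  have "L5_E = (\<lambda>i. {i, Suc i}) ` {..<4}"
    unfolding L5_E_def by auto
  also have "{..<4::nat} = {0, 1, 2, 3}" by auto
  finally show ?thesis by (simp add: numeral_eq_Suc)
qed

lemma L5_E_doubletons: "\<forall>e\<in>L5_E. \<exists>x y. e = {x, y} \<and> e \<subseteq> L5_V"
  unfolding L5_E_eq L5_V_eq by auto

lemma graph_iso_L5_path_edges:
  assumes "distinct [a, b, c, d, e]"
  shows "graph_iso L5_V L5_E {a, b, c, d, e} (path_edges a b c d e)"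
  unfolding graph_iso_def
proof (intro exI conjI)
  show "bij_betw ((!) [a, b, c, d, e]) L5_V {a, b, c, d, e}"
    by (rule bij_betw_nth) (use assms in \<open>auto simp: L5_V_def\<close>)
  show "\<forall>x\<in>L5_V. \<forall>y\<in>L5_V. {x, y} \<in> L5_E \<longleftrightarrow>
      {[a, b, c, d, e] ! x, [a, b, c, d, e] ! y} \<in> path_edges a b c d e"
    unfolding L5_V_eq L5_E_eq path_edges_def using assms by (simp add: doubleton_eq_iff) blast
qed

lemma graph_iso_L5E:
  assumes "graph_iso L5_V L5_E W F" "\<forall>e\<in>F. \<exists>x y. e = {x, y} \<and> e \<subseteq> W"
  obtains a b c d e where "distinct [a, b, c, d, e]" "W = {a, b, c, d, e}"
    "F = path_edges a b c d e"
proof -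
  obtain f where f: "bij_betw f L5_V W" "\<forall>x\<in>L5_V. \<forall>y\<in>L5_V. {x, y} \<in> L5_E \<longleftrightarrow> {f x, f y} \<in> F"
    using assms(1) unfolding graph_iso_def by blast
  have "distinct [f 0, f 1, f 2, f 3, f 4]"
    using bij_betw_imp_inj_on[OF f(1)] unfolding L5_V_eq inj_on_def by auto
  moreover have "W = {f 0, f 1, f 2, f 3, f 4}"
    using bij_betw_imp_surj_on[OF f(1)] unfolding L5_V_eq by auto
  moreover have "F = path_edges (f 0) (f 1) (f 2) (f 3) (f 4)"
    unfolding graph_iso_edges_eq_image[OF f L5_E_doubletons assms(2)] L5_E_eq path_edges_def
    by (simp add: numeral_eq_Suc)
  ultimately show ?thesis using that by blast
qed

definition paths5 :: "'a set set \<Rightarrow> ('a \<times> 'a \<times> 'a \<times> 'a \<times> 'a) set" where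
  "paths5 E = {(a, b, c, d, e). distinct [a, b, c, d, e] \<and> path_edges a b c d e \<subseteq> E}"

definition path_subgraph :: "'a \<times> 'a \<times> 'a \<times> 'a \<times> 'a \<Rightarrow> 'a set \<times> 'a set set" where
  "path_subgraph = (\<lambda>(a, b, c, d, e). ({a, b, c, d, e}, path_edges a b c d e))"

lemma path_edges_vertices:
  assumes G: "simple_graph V E" and "path_edges a b c d e \<subseteq> E"
  shows "{a, b, c, d, e} \<subseteq> V"
proof -
  have "{a, b} \<in> E" "{c, d} \<in> E" "{d, e} \<in> E"
    using assms(2) unfolding path_edges_def by auto
  then show ?thesis
    using simple_graph_edge_vertices[OF G] by simp
qed

lemma finite_paths5:
  assumes G: "simple_graph V E"
  shows "finite (paths5 E)"
proof -
  have "paths5 E \<subseteq> V \<times> V \<times> V \<times> V \<times> V"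
    using path_edges_vertices[OF G] unfolding paths5_def by auto
  then show ?thesis
    by (rule finite_subset) (use simple_graph_finite[OF G] in auto)
qed

lemma path_subgraph_paths5:
  assumes G: "simple_graph V E"
  shows "path_subgraph ` paths5 E = {(W, F). subgraph W F V E \<and> graph_iso L5_V L5_E W F}"
proof (intro set_eqI iffI)
  fix H assume "H \<in> path_subgraph ` paths5 E"
  then obtain a b c d e where H: "H = ({a, b, c, d, e}, path_edges a b c d e)"
    and p: "distinct [a, b, c, d, e]" "path_edges a b c d e \<subseteq> E"
    unfolding paths5_def path_subgraph_def by auto
  have "subgraph {a, b, c, d, e} (path_edges a b c d e) V E"
    using path_edges_vertices[OF G p(2)] p(2) unfolding subgraph_def path_edges_def by simp
  with graph_iso_L5_path_edges[OF p(1)]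
  show "H \<in> {(W, F). subgraph W F V E \<and> graph_iso L5_V L5_E W F}"
    unfolding H by simp
next
  fix H assume "H \<in> {(W, F). subgraph W F V E \<and> graph_iso L5_V L5_E W F}"
  then obtain W F where H: "H = (W, F)" "subgraph W F V E" "graph_iso L5_V L5_E W F"
    by blast
  have "\<exists>x y. e = {x, y} \<and> e \<subseteq> W" if "e \<in> F" for e
  proof -
    from that H(2) have "e \<in> E" "e \<subseteq> W" unfolding subgraph_def by auto
    with G show ?thesis unfolding simple_graph_def by meson
  qed
  with H(3) obtain a b c d e where "distinct [a, b, c, d, e]" "W = {a, b, c, d, e}"
    "F = path_edges a b c d e"
    by (metis graph_iso_L5E)
  with H have "(a, b, c, d, e) \<in> paths5 E" "H = path_subgraph (a, b, c, d, e)"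
    unfolding paths5_def subgraph_def path_subgraph_def by simp_all
  then show "H \<in> path_subgraph ` paths5 E"
    by (rule rev_image_eqI)
qed

lemma path_subgraph_fibre:
  assumes "p \<in> paths5 E"
  shows "card {q \<in> paths5 E. path_subgraph q = path_subgraph p} = 2"
proof -
  obtain a b c d e where p: "p = (a, b, c, d, e)" "distinct [a, b, c, d, e]"
    "path_edges a b c d e \<subseteq> E"
    using assms unfolding paths5_def by auto
  have "{q \<in> paths5 E. path_subgraph q = path_subgraph p} = {(a, b, c, d, e), (e, d, c, b, a)}"
  proof (intro set_eqI iffI)
    fix q assume "q \<in> {q \<in> paths5 E. path_subgraph q = path_subgraph p}"
    then obtain a' b' c' d' e' where "q = (a', b', c', d', e')" "distinct [a', b', c', d', e']"
      "path_edges a' b' c' d' e' = path_edges a b c d e"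
      unfolding paths5_def path_subgraph_def p(1) by auto
    then show "q \<in> {(a, b, c, d, e), (e, d, c, b, a)}"
      using path_edges_eq_iff[OF p(2)] by auto
  next
    fix q assume "q \<in> {(a, b, c, d, e), (e, d, c, b, a)}"
    then show "q \<in> {q \<in> paths5 E. path_subgraph q = path_subgraph p}"
      using p path_edges_rev[of a b c d e]
      unfolding paths5_def path_subgraph_def by (auto simp: insert_commute)
  qed
  then show ?thesis using p(2) by simp
qed

lemma card_paths5_eq_subgraph_count:
  assumes "simple_graph V E"
  shows "card (paths5 E) = 2 * subgraph_count L5_V L5_E V E"
  unfolding subgraph_count_def path_subgraph_paths5[OF assms, symmetric]
  by (rule card_eq_mult_card_image[OF finite_paths5[OF assms]])
    (auto intro: path_subgraph_fibre)

definition ordered_edge_pairs :: "'a set set \<Rightarrow> ('a \<times> 'a \<times> 'a \<times> 'a) set" where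
  "ordered_edge_pairs E = {(a, b, d, e). {a, b} \<in> E \<and> {d, e} \<in> E \<and> distinct [a, b, d, e]}"

definition centre_count :: "'a set \<Rightarrow> 'a set set \<Rightarrow> 'a \<times> 'a \<times> 'a \<times> 'a \<Rightarrow> nat" where
  "centre_count V E = (\<lambda>(a, b, d, e). card {c \<in> V - {a, b, d, e}. {b, c} \<in> E \<and> {c, d} \<in> E})"

lemma finite_ordered_edge_pairs:
  assumes G: "simple_graph V E"
  shows "finite (ordered_edge_pairs E)"
proof -
  have "ordered_edge_pairs E \<subseteq> V \<times> V \<times> V \<times> V"
    using simple_graph_edge_vertices[OF G] unfolding ordered_edge_pairs_def by auto
  then show ?thesis
    by (rule finite_subset) (use simple_graph_finite[OF G] in auto)
qed

lemma card_paths5_eq_sum_centre_count: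
  assumes G: "simple_graph V E"
  shows "card (paths5 E) = (\<Sum>x\<in>ordered_edge_pairs E. centre_count V E x)"
proof -
  define ends :: "'a \<times> 'a \<times> 'a \<times> 'a \<times> 'a \<Rightarrow> 'a \<times> 'a \<times> 'a \<times> 'a"
    where "ends = (\<lambda>(a, b, c, d, e). (a, b, d, e))"
  have "ends ` paths5 E \<subseteq> ordered_edge_pairs E"
    unfolding ends_def paths5_def ordered_edge_pairs_def path_edges_def by auto
  then have "card (paths5 E) = (\<Sum>x\<in>ordered_edge_pairs E. card {p \<in> paths5 E. ends p = x})"
    unfolding card_eq_sum
    by (rule sum.group[OF finite_paths5[OF G] finite_ordered_edge_pairs[OF G], symmetric])
  also have "\<dots> = (\<Sum>x\<in>ordered_edge_pairs E. centre_count V E x)"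
  proof (rule sum.cong[OF refl], clarify)
    fix a b d e assume "(a, b, d, e) \<in> ordered_edge_pairs E"
    then have "{p \<in> paths5 E. ends p = (a, b, d, e)} =
        (\<lambda>c. (a, b, c, d, e)) ` {c \<in> V - {a, b, d, e}. {b, c} \<in> E \<and> {c, d} \<in> E}"
      using path_edges_vertices[OF G]
      unfolding ends_def paths5_def ordered_edge_pairs_def path_edges_def by auto
    then show "card {p \<in> paths5 E. ends p = (a, b, d, e)} = centre_count V E (a, b, d, e)"
      unfolding centre_count_def by (simp add: card_image inj_on_def)
  qed
  finally show ?thesis .
qed

lemma centre_count_eq_sum_adj:
  assumes "finite V"
  shows "centre_count V E (a, b, d, e) = (\<Sum>c\<in>V - {a, b, d, e}. adj E b c * adj E d c)"
  using card_filter_eq_sum_adj[of "V - {a, b, d, e}" b E d] assms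
  by (simp add: centre_count_def adj_commute[of E _ d])

lemma Qterm_eq_sum_adj:
  assumes "finite V"
  shows "Qterm V E s t u v =
    (\<Sum>c\<in>V - {s, t, u, v}. (adj E s c + adj E t c) * (adj E u c + adj E v c))"
proof -
  have "(\<Sum>w\<in>nbhd V E x - {s, t, u, v}. adj E u w + adj E v w)
      = (\<Sum>c\<in>V - {s, t, u, v}. adj E x c * (adj E u c + adj E v c))" for x
  proof -
    have "nbhd V E x - {s, t, u, v} = {c \<in> V - {s, t, u, v}. {x, c} \<in> E}"
      unfolding nbhd_def by auto
    then have "(\<Sum>w\<in>nbhd V E x - {s, t, u, v}. adj E u w + adj E v w)
        = (\<Sum>c\<in>V - {s, t, u, v}. if {x, c} \<in> E then adj E u c + adj E v c else 0)"
      using assms by (simp only: sum.inter_filter finite_Diff)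
    also have "\<dots> = (\<Sum>c\<in>V - {s, t, u, v}. adj E x c * (adj E u c + adj E v c))"
      by (rule sum.cong) (auto simp: adj_def[of E x])
    finally show ?thesis .
  qed
  then show ?thesis
    unfolding Qterm_def by (simp add: sum.distrib[symmetric] algebra_simps)
qed

definition edge_pair :: "'a \<times> 'a \<times> 'a \<times> 'a \<Rightarrow> 'a set set" where
  "edge_pair = (\<lambda>(a, b, d, e). {{a, b}, {d, e}})"

lemma ordered_edge_pairs_fibre:
  assumes "{s, t} \<in> E" "{u, v} \<in> E" "distinct [s, t, u, v]"
  shows "{x \<in> ordered_edge_pairs E. edge_pair x = {{s, t}, {u, v}}} =
    {(s, t, u, v), (t, s, u, v), (s, t, v, u), (t, s, v, u),
     (u, v, s, t), (v, u, s, t), (u, v, t, s), (v, u, t, s)}"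
proof (rule set_eqI, clarify)
  fix a b d e
  have "edge_pair (a, b, d, e) = {{s, t}, {u, v}} \<longleftrightarrow>
      {a, b} = {s, t} \<and> {d, e} = {u, v} \<or> {a, b} = {u, v} \<and> {d, e} = {s, t}"
    unfolding edge_pair_def by (simp add: doubleton_eq_iff)
  also have "\<dots> \<longleftrightarrow> ((a = s \<and> b = t) \<or> (a = t \<and> b = s)) \<and> ((d = u \<and> e = v) \<or> (d = v \<and> e = u))
      \<or> ((a = u \<and> b = v) \<or> (a = v \<and> b = u)) \<and> ((d = s \<and> e = t) \<or> (d = t \<and> e = s))"
    by (simp add: doubleton_eq_iff)
  finally have pair_iff: "edge_pair (a, b, d, e) = {{s, t}, {u, v}} \<longleftrightarrow> \<dots>" .
  show "(a, b, d, e) \<in> {x \<in> ordered_edge_pairs E. edge_pair x = {{s, t}, {u, v}}} \<longleftrightarrow>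
    (a, b, d, e) \<in> {(s, t, u, v), (t, s, u, v), (s, t, v, u), (t, s, v, u),
     (u, v, s, t), (v, u, s, t), (u, v, t, s), (v, u, t, s)}"
    unfolding mem_Collect_eq pair_iff using assms
    by (auto simp: ordered_edge_pairs_def insert_commute)
qed

lemma sum_centre_count_edge_pair:
  assumes "finite V" "{s, t} \<in> E" "{u, v} \<in> E" "distinct [s, t, u, v]"
  shows "(\<Sum>x\<in>{x \<in> ordered_edge_pairs E. edge_pair x = {{s, t}, {u, v}}}. centre_count V E x)
    = 2 * Qterm V E s t u v"
proof -
  have "(\<Sum>x\<in>{x \<in> ordered_edge_pairs E. edge_pair x = {{s, t}, {u, v}}}. centre_count V E x)
      = (\<Sum>c\<in>V - {s, t, u, v}. 2 * ((adj E s c + adj E t c) * (adj E u c + adj E v c)))"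
    unfolding ordered_edge_pairs_fibre[OF assms(2-4)] using assms(4)
    by (simp add: centre_count_eq_sum_adj[OF assms(1)] insert_commute sum.distrib[symmetric]
        algebra_simps adj_commute mult_2)
  also have "\<dots> = 2 * Qterm V E s t u v"
    unfolding Qterm_eq_sum_adj[OF assms(1)] by (simp add: sum_distrib_left)
  finally show ?thesis .
qed

lemma Qset_eq_image_edge_pair: "Qset E = edge_pair ` ordered_edge_pairs E"
proof
  show "Qset E \<subseteq> edge_pair ` ordered_edge_pairs E"
  proof
    fix p assume "p \<in> Qset E"
    then obtain s t u v where "p = {{s, t}, {u, v}}" "{s, t} \<in> E" "{u, v} \<in> E" "distinct [s, t, u, v]"
      unfolding Qset_def by blast
    then show "p \<in> edge_pair ` ordered_edge_pairs E"
      unfolding edge_pair_def ordered_edge_pairs_def by (intro image_eqI[of _ _ "(s, t, u, v)"]) auto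
  qed
  show "edge_pair ` ordered_edge_pairs E \<subseteq> Qset E"
    unfolding edge_pair_def ordered_edge_pairs_def Qset_def by fastforce
qed

lemma Qset_representative:
  assumes "p \<in> Qset E"
  obtains s t u v
  where "(SOME (s, t, u, v). p = {{s, t}, {u, v}} \<and> distinct [s, t, u, v]) = (s, t, u, v)"
    and "p = {{s, t}, {u, v}}" "distinct [s, t, u, v]" "{s, t} \<in> E" "{u, v} \<in> E"
proof -
  obtain s t u v
    where rep: "(SOME (s, t, u, v). p = {{s, t}, {u, v}} \<and> distinct [s, t, u, v]) = (s, t, u, v)"
    by (cases "SOME (s, t, u, v). p = {{s, t}, {u, v}} \<and> distinct [s, t, u, v]") auto
  have "\<exists>x. case x of (s, t, u, v) \<Rightarrow> p = {{s, t}, {u, v}} \<and> distinct [s, t, u, v]"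
    and "p \<subseteq> E"
    using assms unfolding Qset_def by auto
  moreover from someI_ex[OF this(1), unfolded rep]
  have "p = {{s, t}, {u, v}}" "distinct [s, t, u, v]" by simp_all
  ultimately show ?thesis
    using rep by (intro that) auto
qed

lemma sum_centre_count_eq_Qsum:
  assumes G: "simple_graph V E"
  shows "(\<Sum>x\<in>ordered_edge_pairs E. centre_count V E x) = 2 * Qsum V E"
proof -
  have "(\<Sum>x\<in>ordered_edge_pairs E. centre_count V E x) =
      (\<Sum>p\<in>Qset E. \<Sum>x\<in>{x \<in> ordered_edge_pairs E. edge_pair x = p}. centre_count V E x)"
    unfolding Qset_eq_image_edge_pair by (rule sum.image_gen[OF finite_ordered_edge_pairs[OF G]])
  also have "\<dots> = (\<Sum>p\<in>Qset E. 2 *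
      (case SOME (s, t, u, v). p = {{s, t}, {u, v}} \<and> distinct [s, t, u, v] of
        (s, t, u, v) \<Rightarrow> Qterm V E s t u v))"
  proof (rule sum.cong[OF refl])
    fix p assume "p \<in> Qset E"
    then obtain s t u v
      where "(SOME (s, t, u, v). p = {{s, t}, {u, v}} \<and> distinct [s, t, u, v]) = (s, t, u, v)"
        and "p = {{s, t}, {u, v}}" "distinct [s, t, u, v]" "{s, t} \<in> E" "{u, v} \<in> E"
      by (rule Qset_representative)
    then show "(\<Sum>x\<in>{x \<in> ordered_edge_pairs E. edge_pair x = p}. centre_count V E x) = 2 *
      (case SOME (s, t, u, v). p = {{s, t}, {u, v}} \<and> distinct [s, t, u, v] of
        (s, t, u, v) \<Rightarrow> Qterm V E s t u v)"
      using sum_centre_count_edge_pair[OF simple_graph_finite[OF G]] by simp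
  qed
  also have "\<dots> = 2 * Qsum V E"
    unfolding Qsum_def by (simp add: sum_distrib_left)
  finally show ?thesis .
qed

theorem proposition2:
  fixes V :: "'a set" and E :: "'a set set"
  assumes "simple_graph V E"
  shows "subgraph_count L5_V L5_E V E = Qsum V E"
proof -
  have "2 * subgraph_count L5_V L5_E V E = card (paths5 E)"
    by (rule card_paths5_eq_subgraph_count[OF assms, symmetric])
  also have "\<dots> = 2 * Qsum V E"
    unfolding card_paths5_eq_sum_centre_count[OF assms] by (rule sum_centre_count_eq_Qsum[OF assms])
  finally show ?thesis by simp
qed

end
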